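(* Let $\mathcal T$ be a theory of $\mathsf{LGIM}$, let $\alpha_1,\dots,\alpha_n,\beta$ be basic expressions ($n\ge1$) and $c_1,\dots,c_n,d\in[0,1]$, and assume that every element of $\tau(\alpha_1,c_1),\dots,\tau(\alpha_n,c_n)$ and of $\tau(\beta,d)$ is provable from $\mathcal T$ in $\mathsf{LGIM}$. Then for $r\in[0,1]$: if $r<1-\mathrm{avg}(c_1,\dots,c_n)+d$ then $\mathcal T\vdash_{\mathsf{LGIM}}\alpha_1,\dots,\alpha_n\Rightarrow_r\beta$, and if $r>1-\mathrm{avg}(c_1,\dots,c_n)+d$ then $\mathcal T\vdash_{\mathsf{LGIM}}\lnot(\alpha_1,\dots,\alpha_n\Rightarrow_r\beta)$.
   Context: Fix a continuous t-norm $\odot$ on $[0,1]$ and let $c\oplus d = 1-((1-c)\odot(1-d))$. Write $c\odot_{\L} d=\max(c+d-1,0)$, $c\oplus_{\L} d=\min(c+d,1)$, and $\mathrm{avg}(r_1,\dots,r_n)=(r_1+\dots+r_n)/n$. Basic expressions: built from countably many variables $\phi_0,\phi_1,\dots$ and constants $\bot,\top$ by binary $\land,\lor,\odot$ and unary $\sim$. A generalised graded implication is written $\alpha_1,\dots,\alpha_n\Rightarrow_c\beta$ where $n\ge1$, $\alpha_1,\dots,\alpha_n$ is a multiset of basic expressions, $\beta$ a basic expression, $c\in[0,1]$; for $n=1$ it is a graded implication $\alpha\Rightarrow_c\beta$. Formulas of $\mathsf{LGIM}$ are built from generalised graded implications by classical $\land,\lor,\lnot$; $\Phi\to\Psi$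 abbreviates $\lnot\Phi\lor\Psi$. A theory is a set of formulas. For a basic expression $\alpha$ and $c\in[0,1]$, $\tau(\alpha,c)=\{\top\Rightarrow_t\alpha : t\in[0,1],\ t<c\}\cup\{\alpha\Rightarrow_{1-t}\bot : t\in[0,1],\ t>c\}$. Calculus $\mathsf{LGIM}$: axioms are (i) all substitution instances (by generalised graded implications) of classical propositional tautologies; (ii) for all basic expressions $\alpha,\beta,\gamma$ and $c,d\in[0,1]$: ($\land_1$) $(\alpha\Rightarrow_d\beta)\land(\alpha\Rightarrow_d\gamma)\to(\alpha\Rightarrow_d\beta\land\gamma)$; ($\land_2$) $\alpha\land\beta\Rightarrow_1\alpha$; ($\land_3$) $\alpha\land\beta\Rightarrow_1\beta$; ($\lor_1$) $(\alpha\Rightarrow_d\gamma)\land(\beta\Rightarrow_d\gamma)\to(\alpha\lor\beta\Rightarrow_d\gamma)$; ($\lor_2$) $\alpha\Rightarrow_1\alpha\lor\beta$; ($\lor_3$) $\beta\Rightarrow_1\alpha\lor\beta$; ($\odot_1$) $(\top\Rightarrow_c\alpha)\land(\top\Rightarrow_d\beta)\to(\top\Rightarrow_{c\odot d}\alpha\odot\beta)$; ($\odot_2$) $(\alpha\Rightarrow_c\bot)\land(\beta\Rightarrow_d\bot)\to(\alpha\odot\beta\Rightarrow_{c\oplus d}\bot)$; ($\odot_3$) $\top\Rightarrow_1\top\odot\top$; ($\sim_1$) $(\alpha\Rightarrow_d\beta)\to(\sim\beta\Rightarrow_d\sim\alpha)$; ($\sim_2$) $\sim\sim\alpha\Rightarrow_1\alpha$;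 ($\sim_3$) $\alpha\Rightarrow_1\sim\sim\alpha$; ($\top$) $\alpha\Rightarrow_1\top$; ($\bot$) $\bot\Rightarrow_1\alpha$; (0) $\alpha\Rightarrow_0\beta$; ($c$) $\alpha\Rightarrow_c\alpha$; (inkons) $\lnot(\top\Rightarrow_c\bot)$ for $c>0$; (trans$_1$) $(\alpha\Rightarrow_c\beta)\land(\beta\Rightarrow_d\gamma)\to(\alpha\Rightarrow_{c\odot_{\L}d}\gamma)$; (trans$_2$) $(\alpha\Rightarrow_c\bot)\land(\top\Rightarrow_d\beta)\to(\alpha\Rightarrow_{c\oplus_{\L}d}\beta)$; (lin$_1$) $(\alpha\Rightarrow_1\beta)\lor(\beta\Rightarrow_1\alpha)$; (lin$_2$) $(\top\Rightarrow_d\alpha)\lor(\alpha\Rightarrow_{1-d}\bot)$; (iii) for all basic expressions $\alpha,\alpha_i,\beta_i,\beta,\gamma$ and $c,c_i,d\in[0,1]$: (trans$\varnothing_1$) $(\alpha_1\Rightarrow_{c_1}\beta_1)\land\dots\land(\alpha_n\Rightarrow_{c_n}\beta_n)\land(\beta_1,\dots,\beta_n\Rightarrow_d\gamma)\to(\alpha_1,\dots,\alpha_n\Rightarrow_{\mathrm{avg}(c_1,\dots,c_n)\odot_{\L}d}\gamma)$; (trans$\varnothing_2$) $(\alpha_1,\dots,\alpha_n\Rightarrow_c\beta)\land(\beta\Rightarrow_d\gamma)\to(\alpha_1,\dots,\alpha_n\Rightarrow_{c\odot_{\L}d}\gamma)$; (trans$\varnothing_3$) $(\alpha_1\Rightarrow_{c_1}\bot)\land\dots\land(\alpha_n\Rightarrow_{c_n}\bot)\land(\top\Rightarrow_d\beta)\to(\alpha_1,\dots,\alpha_n\Rightarrow_{\mathrm{avg}(c_1,\dots,c_n)\oplus_{\L}d}\beta)$;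 ($\top\varnothing$) $(\top,\dots,\top\Rightarrow_c\alpha)\to(\top\Rightarrow_c\alpha)$. The only rule is modus ponens. $\mathcal T\vdash_{\mathsf{LGIM}}\Phi$ means $\Phi$ has a finite derivation from axioms and elements of $\mathcal T$ by modus ponens. *)

theory Defs
  imports "HOL-Analysis.Analysis" "HOL-Library.Multiset"
begin

definition cont_tnorm :: "(real \<Rightarrow> real \<Rightarrow> real) \<Rightarrow> bool" where
  "cont_tnorm tn \<longleftrightarrow>
     (\<forall>x\<in>{0..1}. \<forall>y\<in>{0..1}. tn x y \<in> {0..1}) \<and>
     (\<forall>x\<in>{0..1}. \<forall>y\<in>{0..1}. tn x y = tn y x) \<and>
     (\<forall>x\<in>{0..1}. \<forall>y\<in>{0..1}. \<forall>z\<in>{0..1}. tn (tn x y) z = tn x (tn y z)) \<and>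
     (\<forall>x\<in>{0..1}. \<forall>y\<in>{0..1}. \<forall>z\<in>{0..1}. y \<le> z \<longrightarrow> tn x y \<le> tn x z) \<and>
     (\<forall>x\<in>{0..1}. tn x 1 = x) \<and>
     continuous_on ({0..1} \<times> {0..1}) (\<lambda>(x, y). tn x y)"

definition tconorm :: "(real \<Rightarrow> real \<Rightarrow> real) \<Rightarrow> real \<Rightarrow> real \<Rightarrow> real" where
  "tconorm tn c d = 1 - tn (1 - c) (1 - d)"

definition luk_t :: "real \<Rightarrow> real \<Rightarrow> real" where
  "luk_t c d = max (c + d - 1) 0"

definition luk_s :: "real \<Rightarrow> real \<Rightarrow> real" where
  "luk_s c d = min (c + d) 1"

definition avg :: "real list \<Rightarrow> real" where
  "avg cs = sum_list cs / real (length cs)"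

datatype bexp = Var nat | Bot | Top | And bexp bexp | Or bexp bexp | Odot bexp bexp | Neg bexp

text \<open>Formulas: generalised graded implications (multiset of antecedents, consequent, grade)
  combined by classical connectives.\<close>
datatype form = GI "bexp multiset" bexp real | FAnd form form | FOr form form | FNot form

definition Imp :: "form \<Rightarrow> form \<Rightarrow> form" where
  "Imp P Q = FOr (FNot P) Q"

abbreviation gimp :: "bexp \<Rightarrow> real \<Rightarrow> bexp \<Rightarrow> form" where
  "gimp a c b \<equiv> GI {#a#} b c"

fun wf :: "form \<Rightarrow> bool" where
  "wf (GI A b c) \<longleftrightarrow> A \<noteq> {#} \<and> 0 \<le> c \<and> c \<le> 1"
| "wf (FAnd P Q) \<longleftrightarrow> wf P \<and> wf Q"
| "wf (FOr P Q) \<longleftrightarrow> wf P \<and> wf Q"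
| "wf (FNot P) \<longleftrightarrow> wf P"

fun feval :: "(bexp multiset \<Rightarrow> bexp \<Rightarrow> real \<Rightarrow> bool) \<Rightarrow> form \<Rightarrow> bool" where
  "feval v (GI A b c) = v A b c"
| "feval v (FAnd P Q) = (feval v P \<and> feval v Q)"
| "feval v (FOr P Q) = (feval v P \<or> feval v Q)"
| "feval v (FNot P) = (\<not> feval v P)"

text \<open>Substitution instances of classical tautologies = formulas true under every
  valuation of their atoms.\<close>
definition taut_inst :: "form \<Rightarrow> bool" where
  "taut_inst P \<longleftrightarrow> wf P \<and> (\<forall>v. feval v P)"

fun conjs :: "form list \<Rightarrow> form" where
  "conjs [] = undefined"
| "conjs [x] = x"
| "conjs (x # y # xs) = FAnd x (conjs (y # xs))"

abbreviation unit_iv :: "real \<Rightarrow> bool" where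
  "unit_iv c \<equiv> 0 \<le> c \<and> c \<le> 1"

inductive ax :: "(real \<Rightarrow> real \<Rightarrow> real) \<Rightarrow> form \<Rightarrow> bool" for tn where
  taut: "taut_inst P \<Longrightarrow> ax tn P"
| and1: "unit_iv d \<Longrightarrow> ax tn (Imp (FAnd (gimp a d b) (gimp a d g)) (gimp a d (And b g)))"
| and2: "ax tn (gimp (And a b) 1 a)"
| and3: "ax tn (gimp (And a b) 1 b)"
| or1: "unit_iv d \<Longrightarrow> ax tn (Imp (FAnd (gimp a d g) (gimp b d g)) (gimp (Or a b) d g))"
| or2: "ax tn (gimp a 1 (Or a b))"
| or3: "ax tn (gimp b 1 (Or a b))"
| odot1: "unit_iv c \<Longrightarrow> unit_iv d \<Longrightarrow>
    ax tn (Imp (FAnd (gimp Top c a) (gimp Top d b)) (gimp Top (tn c d) (Odot a b)))"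
| odot2: "unit_iv c \<Longrightarrow> unit_iv d \<Longrightarrow>
    ax tn (Imp (FAnd (gimp a c Bot) (gimp b d Bot)) (gimp (Odot a b) (tconorm tn c d) Bot))"
| odot3: "ax tn (gimp Top 1 (Odot Top Top))"
| neg1: "unit_iv d \<Longrightarrow> ax tn (Imp (gimp a d b) (gimp (Neg b) d (Neg a)))"
| neg2: "ax tn (gimp (Neg (Neg a)) 1 a)"
| neg3: "ax tn (gimp a 1 (Neg (Neg a)))"
| top: "ax tn (gimp a 1 Top)"
| bot: "ax tn (gimp Bot 1 a)"
| zero: "ax tn (gimp a 0 b)"
| refl: "unit_iv c \<Longrightarrow> ax tn (gimp a c a)"
| inkons: "0 < c \<Longrightarrow> c \<le> 1 \<Longrightarrow> ax tn (FNot (gimp Top c Bot))"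
| trans1: "unit_iv c \<Longrightarrow> unit_iv d \<Longrightarrow>
    ax tn (Imp (FAnd (gimp a c b) (gimp b d g)) (gimp a (luk_t c d) g))"
| trans2: "unit_iv c \<Longrightarrow> unit_iv d \<Longrightarrow>
    ax tn (Imp (FAnd (gimp a c Bot) (gimp Top d b)) (gimp a (luk_s c d) b))"
| lin1: "ax tn (FOr (gimp a 1 b) (gimp b 1 a))"
| lin2: "unit_iv d \<Longrightarrow> ax tn (FOr (gimp Top d a) (gimp a (1 - d) Bot))"
| transM1: "as \<noteq> [] \<Longrightarrow> length bs = length as \<Longrightarrow> length cs = length as \<Longrightarrow>
    \<forall>c\<in>set cs. unit_iv c \<Longrightarrow> unit_iv d \<Longrightarrow>
    ax tn (Imp (conjs (map (\<lambda>i. gimp (as ! i) (cs ! i) (bs ! i)) [0..<length as]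
                        @ [GI (mset bs) g d]))
               (GI (mset as) g (luk_t (avg cs) d)))"
| transM2: "as \<noteq> [] \<Longrightarrow> unit_iv c \<Longrightarrow> unit_iv d \<Longrightarrow>
    ax tn (Imp (FAnd (GI (mset as) b c) (gimp b d g)) (GI (mset as) g (luk_t c d)))"
| transM3: "as \<noteq> [] \<Longrightarrow> length cs = length as \<Longrightarrow>
    \<forall>c\<in>set cs. unit_iv c \<Longrightarrow> unit_iv d \<Longrightarrow>
    ax tn (Imp (conjs (map (\<lambda>i. gimp (as ! i) (cs ! i) Bot) [0..<length as]
                        @ [gimp Top d b]))
               (GI (mset as) b (luk_s (avg cs) d)))"
| topM: "n \<ge> 1 \<Longrightarrow> unit_iv c \<Longrightarrow>
    ax tn (Imp (GI (replicate_mset n Top) a c) (gimp Top c a))"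

inductive deriv :: "(real \<Rightarrow> real \<Rightarrow> real) \<Rightarrow> form set \<Rightarrow> form \<Rightarrow> bool" for tn T where
  axiom: "ax tn P \<Longrightarrow> deriv tn T P"
| hyp: "P \<in> T \<Longrightarrow> deriv tn T P"
| mp: "deriv tn T (Imp P Q) \<Longrightarrow> deriv tn T P \<Longrightarrow> deriv tn T Q"

definition tau :: "bexp \<Rightarrow> real \<Rightarrow> form set" where
  "tau a c = {gimp Top t a | t. 0 \<le> t \<and> t \<le> 1 \<and> t < c}
           \<union> {gimp a (1 - t) Bot | t. 0 \<le> t \<and> t \<le> 1 \<and> t > c}"

end

theory Submission
  imports Defs
begin

text \<open>For the upper bound, scale the grades of the hypotheses
  \<open>\<alpha>\<^sub>i \<Rightarrow>\<^bsub>1-c\<^sub>i\<^esub> \<bottom>\<close> and \<open>\<top> \<Rightarrow>\<^bsub>d\<^esub> \<beta>\<close>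
  available from the \<open>\<tau>\<close>-sets by \<open>r / (1 - avg c + d) < 1\<close> and combine them with
  (trans\<open>\<varnothing>\<^sub>3\<close>). For the lower bound, assume \<open>\<alpha>\<^sub>1,\<dots>,\<alpha>\<^sub>n \<Rightarrow>\<^sub>r \<beta>\<close>;
  chaining \<open>\<top> \<Rightarrow> \<alpha>\<^sub>i\<close> and \<open>\<beta> \<Rightarrow> \<bottom>\<close> (again from the \<open>\<tau>\<close>-sets, scaled by some
  \<open>m < 1\<close>) through it with (trans\<open>\<varnothing>\<^sub>1\<close>), (trans\<open>\<varnothing>\<^sub>2\<close>) and (\<open>\<top>\<varnothing>\<close>) yields
  \<open>\<top> \<Rightarrow>\<^sub>e \<bottom>\<close> with \<open>e > 0\<close> as soon as \<open>r > 1 - avg c + d\<close>, contradicting (inkons).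
  Since derivable formulas are closed under classical consequence, the negation follows.\<close>

lemma feval_Imp [simp]: "feval v (Imp P Q) \<longleftrightarrow> \<not> feval v P \<or> feval v Q"
  by (simp add: Imp_def)

lemma wf_Imp [simp]: "wf (Imp P Q) \<longleftrightarrow> wf P \<and> wf Q"
  by (simp add: Imp_def)

lemma feval_conjs: "xs \<noteq> [] \<Longrightarrow> feval v (conjs xs) \<longleftrightarrow> (\<forall>P\<in>set xs. feval v P)"
  by (induction xs rule: conjs.induct) auto

lemma wf_conjs: "xs \<noteq> [] \<Longrightarrow> wf (conjs xs) \<longleftrightarrow> (\<forall>P\<in>set xs. wf P)"
  by (induction xs rule: conjs.induct) auto

lemma avg_nonneg: "\<forall>c\<in>set cs. 0 \<le> c \<Longrightarrow> 0 \<le> avg cs"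
  unfolding avg_def by (simp add: sum_list_nonneg)

lemma avg_le_one:
  assumes "\<forall>c\<in>set cs. c \<le> 1"
  shows "avg cs \<le> 1"
proof (cases "cs = []")
  case False
  have "sum_list cs \<le> (\<Sum>c\<leftarrow>cs. 1)"
    using sum_list_mono[of cs id "\<lambda>_. 1"] assms by simp
  then show ?thesis
    using False by (simp add: avg_def sum_list_triv divide_le_eq_1)
qed (simp add: avg_def)

lemma avg_const_mult: "avg (map (\<lambda>c. m * c) cs) = m * avg cs"
  by (simp add: avg_def sum_list_const_mult)

lemma avg_const_mult_complement:
  "cs \<noteq> [] \<Longrightarrow> avg (map (\<lambda>c. m * (1 - c)) cs) = m * (1 - avg cs)"
  unfolding avg_def length_map sum_list_const_mult[of m "\<lambda>c. 1 - c"]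
  by (simp add: sum_list_subtractf sum_list_triv field_simps)

lemma tconorm_unit:
  assumes "cont_tnorm tn" "unit_iv c" "unit_iv d"
  shows "unit_iv (tconorm tn c d)"
  using assms unfolding cont_tnorm_def tconorm_def
  by (metis atLeastAtMost_iff diff_ge_0_iff_ge diff_le_eq le_add_same_cancel1)

lemma ax_wf:
  assumes "cont_tnorm tn" "ax tn P"
  shows "wf P"
  using assms(2)
proof induction
  case (taut P)
  then show ?case by (simp add: taut_inst_def)
next
  case (odot1 c d a b)
  then show ?case using assms(1) by (auto simp: cont_tnorm_def)
next
  case (odot2 c d a b)
  then show ?case using assms(1) tconorm_unit by auto
next
  case (transM1 as bs cs d g)
  then have "avg cs \<le> 1" by (simp add: avg_le_one)
  with transM1 show ?case by (auto simp: wf_conjs luk_t_def)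
next
  case (transM3 as cs d b)
  then show ?case
    by (auto simp: wf_conjs luk_s_def avg_nonneg)
qed (auto simp: luk_t_def luk_s_def)

lemma deriv_wf:
  assumes "cont_tnorm tn" "\<forall>P\<in>T. wf P" "deriv tn T P"
  shows "wf P"
  using assms(3) by induction (use assms ax_wf in auto)

lemma deriv_consequence:
  assumes "cont_tnorm tn" "\<forall>P\<in>T. wf P" "\<forall>P\<in>set Ps. deriv tn T P" "wf Q"
    and "\<And>v. \<forall>P\<in>set Ps. feval v P \<Longrightarrow> feval v Q"
  shows "deriv tn T Q"
  using assms(3-)
proof (induction Ps arbitrary: Q)
  case Nil
  then show ?case by (simp add: deriv.axiom ax.taut taut_inst_def)
next
  case (Cons P Ps)
  have "wf P" using deriv_wf Cons.prems(1) assms(1,2) by simp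
  then have "deriv tn T (Imp P Q)" using Cons by simp
  then show ?case using Cons.prems(1) deriv.mp by simp
qed

lemma deriv_conjs:
  assumes "cont_tnorm tn" "\<forall>P\<in>T. wf P" "xs \<noteq> []" "\<forall>P\<in>set xs. deriv tn T P"
  shows "deriv tn T (conjs xs)"
  using assms deriv_wf by (intro deriv_consequence) (auto simp: wf_conjs feval_conjs)

lemma deriv_top_imp_scaled:
  assumes "\<forall>P\<in>tau a c. deriv tn T P" "unit_iv c" "0 \<le> m" "m < 1"
  shows "deriv tn T (gimp Top (m * c) a)"
proof (cases "c = 0")
  case False
  then have "gimp Top (m * c) a \<in> tau a c"
    using assms(2-4) unfolding tau_def by (auto simp: mult_le_one)
  then show ?thesis using assms(1) by blast
qed (simp add: deriv.axiom ax.zero)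

lemma deriv_imp_bot_scaled:
  assumes "\<forall>P\<in>tau a c. deriv tn T P" "unit_iv c" "0 \<le> m" "m < 1"
  shows "deriv tn T (gimp a (m * (1 - c)) Bot)"
proof (cases "c = 1")
  case False
  have "m * (1 - c) < 1 - c"
    using assms(2,4) False mult_strict_right_mono[of m 1 "1 - c"] by simp
  then have "gimp a (1 - (1 - m * (1 - c))) Bot \<in> tau a c"
    using assms(2-4) unfolding tau_def
    by (intro UnI2 CollectI exI[of _ "1 - m * (1 - c)"]) (auto simp: mult_le_one)
  then show ?thesis using assms(1) by simp
qed (simp add: deriv.axiom ax.zero)

lemma exists_scale_below_one:
  fixes s t :: real
  assumes "0 \<le> t" "t < s"
  shows "\<exists>m. 0 \<le> m \<and> m < 1 \<and> t < m * s"
proof -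
  have "t / s < 1" using assms by simp
  then obtain m where m: "t / s < m" "m < 1" using dense by blast
  moreover have "0 \<le> m" using m(1) assms by (smt (verit) divide_nonneg_pos)
  ultimately show ?thesis using assms by (auto simp: pos_divide_less_eq)
qed

lemma deriv_refute_inconsistent:
  assumes "cont_tnorm tn" "\<forall>P\<in>T. wf P" "wf H" "0 < e" "e \<le> 1"
    and "deriv tn T (Imp H (gimp Top e Bot))"
  shows "deriv tn T (FNot H)"
  using assms deriv.axiom[OF ax.inkons[of e tn]]
  by (intro deriv_consequence[of tn T "[Imp H (gimp Top e Bot), FNot (gimp Top e Bot)]"]) auto

context
  fixes tn :: "real \<Rightarrow> real \<Rightarrow> real" and T :: "form set"
    and as :: "bexp list" and cs :: "real list" and b :: bexp and d :: real
  assumes tnorm: "cont_tnorm tn" and wf_T: "\<forall>P\<in>T. wf P"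
    and as_nonempty: "as \<noteq> []" and length_cs: "length cs = length as"
    and cs_unit: "\<forall>c\<in>set cs. unit_iv c" and d_unit: "0 \<le> d" "d \<le> 1"
    and tau_as: "\<forall>i<length as. \<forall>P\<in>tau (as ! i) (cs ! i). deriv tn T P"
    and tau_b: "\<forall>P\<in>tau b d. deriv tn T P"
begin

lemma cs_nth_unit: "i < length as \<Longrightarrow> unit_iv (cs ! i)"
  using cs_unit length_cs by (metis nth_mem)

lemma deriv_multi_imp_below:
  assumes r: "0 \<le> r" "r \<le> 1" "r < 1 - avg cs + d"
  shows "deriv tn T (GI (mset as) b r)"
proof -
  define l where "l = r / (1 - avg cs + d)"
  have l: "0 \<le> l" "l < 1" and lS: "l * (1 - avg cs + d) = r"
    using r by (simp_all add: l_def)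
  define cs' where "cs' = map (\<lambda>c. l * (1 - c)) cs"
  have cs'_unit: "\<forall>c\<in>set cs'. unit_iv c"
    using cs_unit l by (auto simp: cs'_def mult_le_one)
  have "avg cs' = l * (1 - avg cs)"
    unfolding cs'_def using as_nonempty length_cs by (intro avg_const_mult_complement) auto
  then have "avg cs' + l * d = r"
    using lS by (simp add: algebra_simps)
  then have grade: "luk_s (avg cs') (l * d) = r"
    using r l by (simp add: luk_s_def)
  let ?prems = "map (\<lambda>i. gimp (as ! i) (cs' ! i) Bot) [0..<length as] @ [gimp Top (l * d) b]"
  have "\<forall>P\<in>set ?prems. deriv tn T P"
    using tau_as tau_b cs_nth_unit d_unit l length_cs
    by (auto simp: cs'_def intro!: deriv_imp_bot_scaled deriv_top_imp_scaled)
  then have "deriv tn T (conjs ?prems)"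
    using tnorm wf_T by (simp add: deriv_conjs)
  moreover have "deriv tn T (Imp (conjs ?prems) (GI (mset as) b (luk_s (avg cs') (l * d))))"
    using as_nonempty length_cs cs'_unit d_unit l
    by (intro deriv.axiom ax.transM3) (auto simp: cs'_def mult_le_one)
  ultimately show ?thesis using grade deriv.mp by metis
qed

lemma deriv_not_multi_imp_above:
  assumes r: "r \<le> 1" "1 - avg cs + d < r"
  shows "deriv tn T (FNot (GI (mset as) b r))"
proof -
  have "avg cs \<le> 1" using cs_unit by (simp add: avg_le_one)
  then have "0 \<le> r" using r d_unit by simp
  obtain m where m: "0 \<le> m" "m < 1" and m_large: "2 - r < m * (1 + avg cs - d)"
    using exists_scale_below_one[of "2 - r" "1 + avg cs - d"] r by auto
  define tops where "tops = replicate (length as) Top"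
  define ts where "ts = map (\<lambda>c. m * c) cs"
  define x where "x = luk_t (avg ts) r"
  define g where "g = m * (1 - d)"
  define e where "e = luk_t x g"
  have avg_ts: "avg ts = m * avg cs"
    by (simp add: ts_def avg_const_mult)
  have "unit_iv (avg ts)" and g: "unit_iv g"
    using m \<open>avg cs \<le> 1\<close> avg_nonneg[of cs] cs_unit d_unit
    by (auto simp: avg_ts g_def mult_le_one)
  then have x: "unit_iv x"
    using \<open>0 \<le> r\<close> r(1) by (auto simp: x_def luk_t_def)
  have "0 < x + g - 1"
    using m_large unfolding x_def g_def avg_ts by (simp add: luk_t_def algebra_simps)
  then have e: "0 < e" "e \<le> 1"
    using x g by (auto simp: e_def luk_t_def)
  have tops: "tops \<noteq> []" "length tops \<ge> 1" "mset tops = replicate_mset (length as) Top"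
    using as_nonempty by (simp_all add: tops_def Suc_le_eq)
  let ?H = "GI (mset as) b r"
  let ?Ds = "map (\<lambda>i. gimp (tops ! i) (ts ! i) (as ! i)) [0..<length tops]"
  have "\<forall>P\<in>set ?Ds. deriv tn T P"
    using tau_as cs_nth_unit m length_cs
    by (auto simp: tops_def ts_def intro!: deriv_top_imp_scaled)
  moreover have "deriv tn T (gimp b g Bot)"
    unfolding g_def using tau_b d_unit m by (intro deriv_imp_bot_scaled) auto
  moreover have "deriv tn T (Imp (conjs (?Ds @ [?H])) (GI (mset tops) b x))"
    unfolding x_def using tops length_cs cs_unit \<open>0 \<le> r\<close> r(1) m
    by (intro deriv.axiom ax.transM1) (auto simp: tops_def ts_def mult_le_one)
  moreover have "deriv tn T (Imp (FAnd (GI (mset tops) b x) (gimp b g Bot)) (GI (mset tops) Bot e))"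
    unfolding e_def using tops x g by (intro deriv.axiom ax.transM2) auto
  moreover have "deriv tn T (Imp (GI (mset tops) Bot e) (gimp Top e Bot))"
    unfolding tops(3) using as_nonempty e by (intro deriv.axiom ax.topM) (simp_all add: Suc_le_eq)
  ultimately have "deriv tn T (Imp ?H (gimp Top e Bot))"
    using as_nonempty \<open>0 \<le> r\<close> r(1) e
    by (intro deriv_consequence[OF tnorm wf_T, of "?Ds @ [gimp b g Bot,
          Imp (conjs (?Ds @ [?H])) (GI (mset tops) b x),
          Imp (FAnd (GI (mset tops) b x) (gimp b g Bot)) (GI (mset tops) Bot e),
          Imp (GI (mset tops) Bot e) (gimp Top e Bot)]"])
      (auto simp: feval_conjs)
  then show ?thesis
    using e as_nonempty \<open>0 \<le> r\<close> r(1) by (intro deriv_refute_inconsistent[OF tnorm wf_T]) auto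
qed

end

theorem mainTheorem8:
  fixes tn :: "real \<Rightarrow> real \<Rightarrow> real" and T :: "form set"
    and as :: "bexp list" and cs :: "real list" and b :: bexp and d r :: real
  assumes "cont_tnorm tn"
    and "\<forall>P\<in>T. wf P"
    and "as \<noteq> []" and "length cs = length as"
    and "\<forall>c\<in>set cs. 0 \<le> c \<and> c \<le> 1" and "0 \<le> d" and "d \<le> 1"
    and "\<forall>i<length as. \<forall>P\<in>tau (as ! i) (cs ! i). deriv tn T P"
    and "\<forall>P\<in>tau b d. deriv tn T P"
    and "0 \<le> r" and "r \<le> 1"
  shows "(r < 1 - avg cs + d \<longrightarrow> deriv tn T (GI (mset as) b r))
       \<and> (r > 1 - avg cs + d \<longrightarrow> deriv tn T (FNot (GI (mset as) b r)))"
  using deriv_multi_imp_below[OF assms(1-9)] deriv_not_multi_imp_above[OF assms(1-9)] assms(10,11)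
  by simp

end
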